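(* Let $\varepsilon\in(0,1]$. There exists a test $T:\Delta_{BD}\to\Sigma_1$ such that (i) $P(T(P))\le\varepsilon$ for every $P\in\Delta_{BD}$, and (ii) $T$ is nonmanipulable: for every probability measure $\zeta$ on $\Delta_{BD}$ with finite support there is a cylinder $C_\zeta$ such that $\zeta(\{P\in\Delta_{BD}:\omega\notin T(P)\})=0$ for every $\omega\in C_\zeta$.
   Context: Let $\Omega=\{0,1\}^{\mathbb N}$ (paths) with the product topology; for $\omega\in\Omega$, $t\ge0$, $\omega^t$ is the cylinder of paths agreeing with $\omega$ in the first $t$ coordinates. $\Sigma$ is a fixed $\sigma$-algebra on $\Omega$ containing all cylinders; $\Sigma_1$ is the family of open subsets of $\Omega$. $\mathbb P$ is the set of finitely additive probabilities on $(\Omega,\Sigma)$. $P\in\mathbb P$ is strongly nonatomic (an "opinion") if for every $E\in\Sigma$ and $\alpha\in[0,1]$ there is $F\in\Sigma$, $F\subseteq E$, with $P(F)=\alpha P(E)$. For $R\in\mathbb P$ and a cylinder with $R(\omega^t)>0$, $R(E\mid\omega^t)=R(E\cap\omega^t)/R(\omega^t)$. $P$ merges with $Q$ ($P,Q\in\mathbb P$) if for every $\varepsilon>0$, $Q(\{\omega:\sup_{E\in\Sigma}|P(E\mid\omega^t)-Q(E\mid\omega^t)|>\varepsilon\})\to0$ as $t\to\infty$ (cylinders with $Q(\omega^t)>0=P(\omega^t)$ counted in the set). $Q\ll P$ means: for every sequence $(E_n)$ in $\Sigma$, $P(E_n)\to0$ implies $Q(E_n)\to0$. $P\in\mathbb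 P$ has the Blackwell–Dubins property if $P$ merges with every $Q\in\mathbb P$ satisfying $Q\ll P$. $\Delta_{BD}$ is the set of strongly nonatomic $P\in\mathbb P$ having the Blackwell–Dubins property. *)

theory Defs
  imports "HOL-Analysis.Analysis" "HOL-Probability.Probability"
begin

text \<open>Paths: Omega = {0,1}^N, rendered as nat => bool; its topology is the library's
  product topology (instance fun :: (type, topological_space) topological_space, with
  bool discrete).\<close>

type_synonym path = "nat \<Rightarrow> bool"

definition cyl :: "path \<Rightarrow> nat \<Rightarrow> path set" where
  "cyl \<omega> t = {\<omega>'. \<forall>i<t. \<omega>' i = \<omega> i}"

definition is_cylinder :: "path set \<Rightarrow> bool" where
  "is_cylinder C \<longleftrightarrow> (\<exists>\<omega> t. C = cyl \<omega> t)"

definition admissible_sigma :: "path set set \<Rightarrow> bool" where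
  "admissible_sigma S \<longleftrightarrow> sigma_algebra UNIV S \<and> (\<forall>\<omega> t. cyl \<omega> t \<in> S)"

text \<open>Finitely additive probabilities on (Omega, S).  A set function is represented by a
  real-valued function on all sets, normalised to be 0 outside S (canonical representative).\<close>
definition fa_prob :: "path set set \<Rightarrow> (path set \<Rightarrow> real) \<Rightarrow> bool" where
  "fa_prob S P \<longleftrightarrow>
     (\<forall>E. E \<notin> S \<longrightarrow> P E = 0) \<and>
     (\<forall>E\<in>S. 0 \<le> P E) \<and>
     P UNIV = 1 \<and>
     (\<forall>E\<in>S. \<forall>F\<in>S. E \<inter> F = {} \<longrightarrow> P (E \<union> F) = P E + P F)"

definition strongly_nonatomic :: "path set set \<Rightarrow> (path set \<Rightarrow> real) \<Rightarrow> bool" where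
  "strongly_nonatomic S P \<longleftrightarrow>
     (\<forall>E\<in>S. \<forall>\<alpha>::real. 0 \<le> \<alpha> \<and> \<alpha> \<le> 1 \<longrightarrow> (\<exists>F\<in>S. F \<subseteq> E \<and> P F = \<alpha> * P E))"

text \<open>Conditional probability R(E | omega^t); only used when R(omega^t) > 0.\<close>
definition cond_prob :: "(path set \<Rightarrow> real) \<Rightarrow> path set \<Rightarrow> path \<Rightarrow> nat \<Rightarrow> real" where
  "cond_prob R E \<omega> t = R (E \<inter> cyl \<omega> t) / R (cyl \<omega> t)"

text \<open>Cylinders of Q-probability 0 contribute Q-measure 0 anyway.\<close>
definition bad_set :: "path set set \<Rightarrow> (path set \<Rightarrow> real) \<Rightarrow> (path set \<Rightarrow> real) \<Rightarrow> real \<Rightarrow> nat \<Rightarrow> path set" where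
  "bad_set S P Q \<epsilon> t = {\<omega>. Q (cyl \<omega> t) > 0 \<and>
      (P (cyl \<omega> t) = 0 \<or>
       (SUP E\<in>S. \<bar>cond_prob P E \<omega> t - cond_prob Q E \<omega> t\<bar>) > \<epsilon>)}"

definition merges :: "path set set \<Rightarrow> (path set \<Rightarrow> real) \<Rightarrow> (path set \<Rightarrow> real) \<Rightarrow> bool" where
  "merges S P Q \<longleftrightarrow> (\<forall>\<epsilon>>0. (\<lambda>t. Q (bad_set S P Q \<epsilon> t)) \<longlonglongrightarrow> 0)"

definition abs_cont :: "path set set \<Rightarrow> (path set \<Rightarrow> real) \<Rightarrow> (path set \<Rightarrow> real) \<Rightarrow> bool" where
  "abs_cont S Q P \<longleftrightarrow>
     (\<forall>En :: nat \<Rightarrow> path set. (\<forall>n. En n \<in> S) \<longrightarrow>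
        (\<lambda>n. P (En n)) \<longlonglongrightarrow> 0 \<longrightarrow> (\<lambda>n. Q (En n)) \<longlonglongrightarrow> 0)"

definition blackwell_dubins :: "path set set \<Rightarrow> (path set \<Rightarrow> real) \<Rightarrow> bool" where
  "blackwell_dubins S P \<longleftrightarrow> (\<forall>Q. fa_prob S Q \<and> abs_cont S Q P \<longrightarrow> merges S P Q)"

definition Delta_BD :: "path set set \<Rightarrow> (path set \<Rightarrow> real) set" where
  "Delta_BD S = {P. fa_prob S P \<and> strongly_nonatomic S P \<and> blackwell_dubins S P}"

definition nonmanipulable :: "path set set \<Rightarrow> ((path set \<Rightarrow> real) \<Rightarrow> path set) \<Rightarrow> bool" where
  "nonmanipulable S T \<longleftrightarrow>
     (\<forall>\<zeta> :: (path set \<Rightarrow> real) pmf. finite (set_pmf \<zeta>) \<and> set_pmf \<zeta> \<subseteq> Delta_BD S \<longrightarrow>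
        (\<exists>C. is_cylinder C \<and>
           (\<forall>\<omega>\<in>C. measure_pmf.prob \<zeta> {P \<in> Delta_BD S. \<omega> \<notin> T P} = 0)))"

end

theory Submission
  imports Defs
begin

text \<open>The test rejects a forecaster P on a cylinder cyl x t around one fixed path x, with t
  chosen so that P (cyl x t) \<le> \<epsilon>.  Such cylinders are nested, so for finitely many forecasters
  the longest of them lies inside all the others, which gives nonmanipulability.

  The content is that such a t exists for every P in Delta_BD.  Otherwise
  \<nu> E = lim P (E \<inter> cyl x t) is a nonzero finitely additive set function, dominated by P and
  living on every cylinder around x.  Conditioning \<nu> on a set A of positive \<nu>-measure gives a
  probability Q, absolutely continuous w.r.t. P, with Q (cyl x t) = 1 for all t, so the
  Blackwell-Dubins property forces the conditionals of P along x to approach Q.  If \<nu> only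
  takes the values 0 and \<nu> UNIV, take A = UNIV: strong nonatomicity gives a set of conditional
  P-probability 1/2 in every cylinder, whereas Q is 0-1 valued.  Otherwise take A = B with
  0 < \<nu> B < \<nu> UNIV: the conditional P-probability of B tends to \<nu> B / \<nu> UNIV < 1, whereas
  Q B = 1.\<close>

lemma open_cyl: "open (cyl x t)"
proof -
  have "cyl x t = (\<Inter>i\<in>{..<t}. (\<lambda>\<omega>::path. \<omega> i) -` {x i})"
    by (auto simp: cyl_def)
  moreover have "open ((\<lambda>\<omega>::path. \<omega> i) -` {x i})" for i
    by (rule open_vimage) (auto intro: discrete_topology_class.open_discrete)
  ultimately show ?thesis by auto
qed

lemma cyl_antimono: "t \<le> s \<Longrightarrow> cyl x s \<subseteq> cyl x t"
  by (auto simp: cyl_def)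

lemma cyl_eq_of_mem: "\<omega> \<in> cyl x t \<Longrightarrow> cyl \<omega> t = cyl x t"
  by (auto simp: cyl_def)

lemma cyl_disjoint_of_not_mem: "\<omega> \<notin> cyl x t \<Longrightarrow> cyl \<omega> t \<inter> cyl x t = {}"
  by (auto simp: cyl_def)

lemma nonmanipulable_cyl: "nonmanipulable S (\<lambda>P. cyl x (n P))"
  unfolding nonmanipulable_def
proof (intro allI impI)
  fix \<zeta> :: "(path set \<Rightarrow> real) pmf"
  assume "finite (set_pmf \<zeta>) \<and> set_pmf \<zeta> \<subseteq> Delta_BD S"
  then have n_le: "n P \<le> Max (n ` set_pmf \<zeta>)" if "P \<in> set_pmf \<zeta>" for P
    using that by auto
  show "\<exists>C. is_cylinder C \<and> (\<forall>\<omega>\<in>C. measure_pmf.prob \<zeta> {P \<in> Delta_BD S. \<omega> \<notin> cyl x (n P)} = 0)"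
  proof (intro exI conjI ballI)
    show "is_cylinder (cyl x (Max (n ` set_pmf \<zeta>)))"
      by (auto simp: is_cylinder_def)
    fix \<omega> assume "\<omega> \<in> cyl x (Max (n ` set_pmf \<zeta>))"
    then have "\<omega> \<in> cyl x (n P)" if "P \<in> set_pmf \<zeta>" for P
      using cyl_antimono[OF n_le[OF that]] by blast
    then have "set_pmf \<zeta> \<inter> {P \<in> Delta_BD S. \<omega> \<notin> cyl x (n P)} = {}"
      by blast
    then show "measure_pmf.prob \<zeta> {P \<in> Delta_BD S. \<omega> \<notin> cyl x (n P)} = 0"
      by (simp add: measure_pmf_zero_iff)
  qed
qed

lemma abs_cont_if_dominated:
  assumes "\<And>E. 0 \<le> Q E" and "\<And>E. Q E \<le> c * P E"
  shows "abs_cont S Q P"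
  unfolding abs_cont_def
proof (intro allI impI)
  fix En :: "nat \<Rightarrow> path set"
  assume "(\<lambda>n. P (En n)) \<longlonglongrightarrow> 0"
  then have lim: "(\<lambda>n. c * P (En n)) \<longlonglongrightarrow> 0"
    by (rule tendsto_mult_right_zero)
  show "(\<lambda>n. Q (En n)) \<longlonglongrightarrow> 0"
    by (rule real_tendsto_sandwich[OF always_eventually always_eventually tendsto_const lim])
      (use assms in auto)
qed

definition tail_measure :: "(path set \<Rightarrow> real) \<Rightarrow> path \<Rightarrow> path set \<Rightarrow> real" where
  "tail_measure P x E = lim (\<lambda>t. P (E \<inter> cyl x t))"

definition conditioned :: "path set set \<Rightarrow> (path set \<Rightarrow> real) \<Rightarrow> path set \<Rightarrow> path set \<Rightarrow> real" where
  "conditioned S \<nu> A E = (if E \<in> S then \<nu> (E \<inter> A) / \<nu> A else 0)"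

locale fa_probability =
  fixes S :: "path set set" and P :: "path set \<Rightarrow> real"
  assumes admissible: "admissible_sigma S" and fa_prob: "fa_prob S P"
begin

sublocale sigma_algebra UNIV S
  using admissible by (simp add: admissible_sigma_def)

lemma cyl_in_sets [simp]: "cyl \<omega> t \<in> S"
  using admissible by (simp add: admissible_sigma_def)

lemma nonneg: "0 \<le> P E"
  using fa_prob unfolding fa_prob_def by (cases "E \<in> S") auto

lemma additive: "E \<in> S \<Longrightarrow> F \<in> S \<Longrightarrow> E \<inter> F = {} \<Longrightarrow> P (E \<union> F) = P E + P F"
  using fa_prob unfolding fa_prob_def by blast

lemma UNIV_eq_1: "P UNIV = 1"
  using fa_prob unfolding fa_prob_def by blast

lemma mono:
  assumes "F \<in> S" and "E \<subseteq> F"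
  shows "P E \<le> P F"
proof (cases "E \<in> S")
  case True
  have "P F = P E + P (F - E)"
    using additive[of E "F - E"] True assms Diff by (simp add: Un_absorb1)
  then show ?thesis using nonneg[of "F - E"] by simp
qed (simp add: nonneg fa_prob[unfolded fa_prob_def])

lemma cond_prob_bounds: "0 \<le> cond_prob P E \<omega> t" "cond_prob P E \<omega> t \<le> 1"
  using nonneg[of "E \<inter> cyl \<omega> t"] mono[of "cyl \<omega> t" "E \<inter> cyl \<omega> t"] nonneg[of "cyl \<omega> t"]
  by (auto simp: cond_prob_def divide_le_eq_1)

lemma null_if_disjoint_full:
  assumes "F \<in> S" "P F = 1" "G \<in> S" "G \<inter> F = {}"
  shows "P G = 0"
  using additive[of G F] mono[of UNIV "G \<union> F"] nonneg[of G] assms UNIV_eq_1 by auto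

lemma inter_eq_if_full:
  assumes "F \<in> S" "P F = 1" "E \<in> S"
  shows "P (E \<inter> F) = P E"
proof -
  have "P ((E \<inter> F) \<union> (E - F)) = P (E \<inter> F) + P (E - F)"
    using assms by (intro additive) auto
  moreover have "(E \<inter> F) \<union> (E - F) = E" by blast
  ultimately have "P E = P (E \<inter> F) + P (E - F)" by simp
  then show ?thesis
    using null_if_disjoint_full[of F "E - F"] assms by auto
qed

lemma bad_set_eq_cyl_if_concentrated:
  assumes Q: "fa_prob S Q" and full: "\<And>t. Q (cyl x t) = 1" and "\<delta> > 0"
    and E: "E \<in> S" "\<delta> \<le> \<bar>P (E \<inter> cyl x t) / P (cyl x t) - Q E\<bar>"
  shows "bad_set S P Q (\<delta>/2) t = cyl x t"
proof -
  interpret Q: fa_probability S Q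
    using admissible Q by unfold_locales
  have "\<omega> \<notin> bad_set S P Q (\<delta>/2) t" if "\<omega> \<notin> cyl x t" for \<omega>
  proof -
    have "Q (cyl \<omega> t) = 0"
      using Q.null_if_disjoint_full[OF Q.cyl_in_sets full Q.cyl_in_sets cyl_disjoint_of_not_mem[OF that]] .
    then show ?thesis by (simp add: bad_set_def)
  qed
  moreover have "\<omega> \<in> bad_set S P Q (\<delta>/2) t" if "\<omega> \<in> cyl x t" for \<omega>
  proof -
    have cyl_\<omega>: "cyl \<omega> t = cyl x t"
      using cyl_eq_of_mem[OF that] .
    have "\<bar>cond_prob P F \<omega> t - cond_prob Q F \<omega> t\<bar> \<le> 1" for F
      using cond_prob_bounds[of F \<omega> t] Q.cond_prob_bounds[of F \<omega> t] by (simp add: abs_le_iff)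
    then have bdd: "bdd_above ((\<lambda>F. \<bar>cond_prob P F \<omega> t - cond_prob Q F \<omega> t\<bar>) ` S)"
      by (intro bdd_aboveI2)
    have "Q (E \<inter> cyl x t) = Q E"
      using Q.inter_eq_if_full[OF Q.cyl_in_sets full E(1)] .
    then have "\<delta> \<le> \<bar>cond_prob P E \<omega> t - cond_prob Q E \<omega> t\<bar>"
      using E(2) by (simp add: cond_prob_def cyl_\<omega> full)
    then have "\<delta> \<le> (SUP F\<in>S. \<bar>cond_prob P F \<omega> t - cond_prob Q F \<omega> t\<bar>)"
      using cSUP_upper2[OF bdd E(1)] by simp
    then show ?thesis
      using \<open>\<delta> > 0\<close> by (simp add: bad_set_def cyl_\<omega> full)
  qed
  ultimately show ?thesis by blast
qed

lemma not_merges_if_concentrated: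
  assumes Q: "fa_prob S Q" and full: "\<And>t. Q (cyl x t) = 1" and "\<delta> > 0"
    and far: "\<And>t. t \<ge> N \<Longrightarrow> \<exists>E\<in>S. \<delta> \<le> \<bar>P (E \<inter> cyl x t) / P (cyl x t) - Q E\<bar>"
  shows "\<not> merges S P Q"
proof
  assume "merges S P Q"
  then have to_0: "(\<lambda>t. Q (bad_set S P Q (\<delta>/2) t)) \<longlonglongrightarrow> 0"
    using \<open>\<delta> > 0\<close> unfolding merges_def by simp
  have "eventually (\<lambda>t. Q (bad_set S P Q (\<delta>/2) t) = 1) sequentially"
    using eventually_ge_at_top[of N]
  proof eventually_elim
    case (elim t)
    then obtain E where "E \<in> S" "\<delta> \<le> \<bar>P (E \<inter> cyl x t) / P (cyl x t) - Q E\<bar>"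
      using far by blast
    then have "bad_set S P Q (\<delta>/2) t = cyl x t"
      by (rule bad_set_eq_cyl_if_concentrated[OF Q full \<open>\<delta> > 0\<close>])
    then show ?case
      using full by simp
  qed
  then have "(\<lambda>t. Q (bad_set S P Q (\<delta>/2) t)) \<longlonglongrightarrow> 1"
    by (rule tendsto_eventually)
  from LIMSEQ_unique[OF to_0 this] show False
    by simp
qed

lemma decseq_inter_cyl:
  assumes "E \<in> S"
  shows "decseq (\<lambda>t. P (E \<inter> cyl x t))"
proof (rule decseq_SucI, rule mono)
  show "E \<inter> cyl x t \<in> S" for t
    using assms by (intro Int cyl_in_sets)
  show "E \<inter> cyl x (Suc t) \<subseteq> E \<inter> cyl x t" for t
    by (intro Int_mono order_refl cyl_antimono) simp
qed

context
  fixes E assumes E: "E \<in> S"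
begin

lemma tail_measure_tendsto: "(\<lambda>t. P (E \<inter> cyl x t)) \<longlonglongrightarrow> tail_measure P x E"
proof -
  have "\<forall>t. 0 \<le> P (E \<inter> cyl x t)"
    by (simp add: nonneg)
  then obtain L where L: "(\<lambda>t. P (E \<inter> cyl x t)) \<longlonglongrightarrow> L"
    using decseq_convergent[OF decseq_inter_cyl[OF E]] by blast
  then show ?thesis
    using limI[OF L] unfolding tail_measure_def by simp
qed

lemma tail_measure_le: "tail_measure P x E \<le> P (E \<inter> cyl x t)"
  using decseq_ge[OF decseq_inter_cyl[OF E] tail_measure_tendsto] .

lemma tail_measure_le_P: "tail_measure P x E \<le> P E"
  using tail_measure_le[of x 0] by (simp add: cyl_def)

lemma tail_measure_nonneg: "0 \<le> tail_measure P x E"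
  by (rule LIMSEQ_le_const[OF tail_measure_tendsto]) (simp add: nonneg)

end

lemma tail_measure_add:
  assumes "E \<in> S" "F \<in> S" "E \<inter> F = {}"
  shows "tail_measure P x (E \<union> F) = tail_measure P x E + tail_measure P x F"
proof -
  have "P ((E \<union> F) \<inter> cyl x t) = P (E \<inter> cyl x t) + P (F \<inter> cyl x t)" for t
  proof -
    have "(E \<union> F) \<inter> cyl x t = (E \<inter> cyl x t) \<union> (F \<inter> cyl x t)" by blast
    moreover have "(E \<inter> cyl x t) \<inter> (F \<inter> cyl x t) = {}" using assms(3) by blast
    moreover have "E \<inter> cyl x t \<in> S" "F \<inter> cyl x t \<in> S"
      using Int[OF assms(1) cyl_in_sets] Int[OF assms(2) cyl_in_sets] .
    ultimately show ?thesis
      using additive[of "E \<inter> cyl x t" "F \<inter> cyl x t"] by simp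
  qed
  then have "(\<lambda>t. P ((E \<union> F) \<inter> cyl x t)) \<longlonglongrightarrow> tail_measure P x E + tail_measure P x F"
    using tendsto_add[OF tail_measure_tendsto[OF assms(1)] tail_measure_tendsto[OF assms(2)]] by simp
  moreover have "(\<lambda>t. P ((E \<union> F) \<inter> cyl x t)) \<longlonglongrightarrow> tail_measure P x (E \<union> F)"
    using assms(1,2) by (intro tail_measure_tendsto Un)
  ultimately show ?thesis
    by (rule LIMSEQ_unique[symmetric])
qed

lemma tail_measure_inter_cyl:
  assumes E: "E \<in> S"
  shows "tail_measure P x (E \<inter> cyl x t) = tail_measure P x E"
proof -
  have "eventually (\<lambda>s. P (E \<inter> cyl x s) = P ((E \<inter> cyl x t) \<inter> cyl x s)) sequentially"
    using eventually_ge_at_top[of t]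
  proof eventually_elim
    case (elim s)
    then have "(E \<inter> cyl x t) \<inter> cyl x s = E \<inter> cyl x s"
      using cyl_antimono[OF elim, of x] by blast
    then show ?case by simp
  qed
  then have "(\<lambda>s. P ((E \<inter> cyl x t) \<inter> cyl x s)) \<longlonglongrightarrow> tail_measure P x E"
    using tail_measure_tendsto[OF E] by (rule Lim_transform_eventually[rotated])
  moreover have "(\<lambda>s. P ((E \<inter> cyl x t) \<inter> cyl x s)) \<longlonglongrightarrow> tail_measure P x (E \<inter> cyl x t)"
    using E by (intro tail_measure_tendsto Int cyl_in_sets)
  ultimately show ?thesis
    by (rule LIMSEQ_unique[symmetric])
qed

lemma tail_measure_mono:
  assumes "E \<in> S" "F \<in> S" "E \<subseteq> F"
  shows "tail_measure P x E \<le> tail_measure P x F"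
proof -
  have "F - E \<in> S"
    using assms by (intro Diff)
  then have "tail_measure P x F = tail_measure P x E + tail_measure P x (F - E)"
    using tail_measure_add[OF assms(1) \<open>F - E \<in> S\<close>] assms(3) by (simp add: Un_absorb1)
  then show ?thesis
    using tail_measure_nonneg[OF \<open>F - E \<in> S\<close>] by simp
qed

context
  fixes x :: path and A :: "path set"
  assumes A: "A \<in> S" and A_pos: "0 < tail_measure P x A"
begin

lemma fa_prob_conditioned_tail: "fa_prob S (conditioned S (tail_measure P x) A)"
  unfolding fa_prob_def
proof (intro conjI ballI allI impI)
  fix E F assume E: "E \<in> S" and F: "F \<in> S" and "E \<inter> F = {}"
  then have "(E \<inter> A) \<inter> (F \<inter> A) = {}" and "(E \<union> F) \<inter> A = (E \<inter> A) \<union> (F \<inter> A)"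
    by blast+
  then have "tail_measure P x ((E \<union> F) \<inter> A) = tail_measure P x (E \<inter> A) + tail_measure P x (F \<inter> A)"
    using tail_measure_add[OF Int[OF E A] Int[OF F A]] by simp
  then show "conditioned S (tail_measure P x) A (E \<union> F) =
      conditioned S (tail_measure P x) A E + conditioned S (tail_measure P x) A F"
    using E F by (simp add: conditioned_def Un add_divide_distrib)
next
  fix E assume "E \<in> S"
  then show "0 \<le> conditioned S (tail_measure P x) A E"
    using tail_measure_nonneg[OF Int[OF \<open>E \<in> S\<close> A]] A_pos by (simp add: conditioned_def)
qed (use A_pos in \<open>simp_all add: conditioned_def\<close>)

lemma abs_cont_conditioned_tail: "abs_cont S (conditioned S (tail_measure P x) A) P"
proof (rule abs_cont_if_dominated)
  interpret Q: fa_probability S "conditioned S (tail_measure P x) A"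
    using admissible fa_prob_conditioned_tail by unfold_locales
  fix E
  show "0 \<le> conditioned S (tail_measure P x) A E"
    by (rule Q.nonneg)
  show "conditioned S (tail_measure P x) A E \<le> inverse (tail_measure P x A) * P E"
  proof (cases "E \<in> S")
    case True
    have "tail_measure P x (E \<inter> A) \<le> P (E \<inter> A)"
      using tail_measure_le_P[OF Int[OF True A]] .
    also have "\<dots> \<le> P E"
      by (rule mono[OF True]) blast
    finally have "tail_measure P x (E \<inter> A) / tail_measure P x A \<le> P E / tail_measure P x A"
      using A_pos by (intro divide_right_mono) simp_all
    then show ?thesis
      using True by (simp add: conditioned_def divide_inverse_commute)
  qed (use nonneg[of E] A_pos in \<open>simp add: conditioned_def\<close>)
qed

lemma conditioned_tail_cyl: "conditioned S (tail_measure P x) A (cyl x t) = 1"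
  using tail_measure_inter_cyl[OF A, of x t] A_pos by (simp add: conditioned_def Int_commute)

lemma blackwell_dubins_tail_conditional:
  assumes "blackwell_dubins S P" and "\<delta> > 0"
  shows "\<exists>t\<ge>N. \<forall>E\<in>S.
    \<bar>P (E \<inter> cyl x t) / P (cyl x t) - tail_measure P x (E \<inter> A) / tail_measure P x A\<bar> < \<delta>"
proof (rule ccontr)
  let ?Q = "conditioned S (tail_measure P x) A"
  assume "\<not> ?thesis"
  then have "\<exists>E\<in>S. \<delta> \<le> \<bar>P (E \<inter> cyl x t) / P (cyl x t) - ?Q E\<bar>" if "t \<ge> N" for t
    using that by (auto simp: conditioned_def not_less)
  then have "\<not> merges S P ?Q"
    by (rule not_merges_if_concentrated[OF fa_prob_conditioned_tail conditioned_tail_cyl \<open>\<delta> > 0\<close>])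
  moreover have "merges S P ?Q"
    using assms(1) fa_prob_conditioned_tail abs_cont_conditioned_tail
    unfolding blackwell_dubins_def by blast
  ultimately show False
    by contradiction
qed

end

lemma tail_measure_UNIV_ge:
  assumes "\<And>t. \<epsilon> \<le> P (cyl x t)"
  shows "\<epsilon> \<le> tail_measure P x UNIV"
  by (rule LIMSEQ_le_const[OF tail_measure_tendsto[OF top]]) (simp add: assms)

lemma two_valued_tail_contradiction:
  assumes bd: "blackwell_dubins S P" and sn: "strongly_nonatomic S P"
    and "0 < \<epsilon>" and big: "\<And>t. \<epsilon> \<le> P (cyl x t)"
    and two_valued: "\<And>B. B \<in> S \<Longrightarrow> tail_measure P x B = 0 \<or> tail_measure P x B = tail_measure P x UNIV"
  shows False
proof -
  have pos: "0 < tail_measure P x UNIV"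
    using tail_measure_UNIV_ge[OF big] \<open>0 < \<epsilon>\<close> by linarith
  have "\<exists>t\<ge>0. \<forall>E\<in>S. \<bar>P (E \<inter> cyl x t) / P (cyl x t)
      - tail_measure P x (E \<inter> UNIV) / tail_measure P x UNIV\<bar> < 1/2"
    by (rule blackwell_dubins_tail_conditional[OF top pos bd]) simp
  then obtain t where t: "\<forall>E\<in>S. \<bar>P (E \<inter> cyl x t) / P (cyl x t)
      - tail_measure P x (E \<inter> UNIV) / tail_measure P x UNIV\<bar> < 1/2"
    by blast
  have nonatomic: "\<exists>F\<in>S. F \<subseteq> E \<and> P F = \<alpha> * P E" if "E \<in> S" "0 \<le> \<alpha>" "\<alpha> \<le> 1" for E \<alpha>
    using sn that unfolding strongly_nonatomic_def by blast
  obtain F where F: "F \<in> S" "F \<subseteq> cyl x t" "P F = 1/2 * P (cyl x t)"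
    using nonatomic[of "cyl x t" "1/2"] by auto
  have "\<bar>P (F \<inter> cyl x t) / P (cyl x t) - tail_measure P x (F \<inter> UNIV) / tail_measure P x UNIV\<bar> < 1/2"
    using t F(1) by blast
  moreover have "P (F \<inter> cyl x t) / P (cyl x t) = 1/2"
    using F big[of t] \<open>0 < \<epsilon>\<close> by (simp add: Int_absorb2)
  ultimately have "\<bar>1/2 - tail_measure P x F / tail_measure P x UNIV\<bar> < 1/2"
    by simp
  moreover have "tail_measure P x F / tail_measure P x UNIV \<in> {0, 1}"
    using two_valued[OF \<open>F \<in> S\<close>] pos by auto
  ultimately show False
    by auto
qed

lemma proper_tail_set_contradiction:
  assumes bd: "blackwell_dubins S P" and "0 < \<epsilon>" and big: "\<And>t. \<epsilon> \<le> P (cyl x t)"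
    and B: "B \<in> S" "0 < tail_measure P x B" "tail_measure P x B < tail_measure P x UNIV"
  shows False
proof -
  define r where "r = tail_measure P x B / tail_measure P x UNIV"
  have "r < 1"
    using B by (simp add: r_def)
  have "(\<lambda>t. P (B \<inter> cyl x t) / P (cyl x t)) \<longlonglongrightarrow> r"
    unfolding r_def using tail_measure_UNIV_ge[OF big] \<open>0 < \<epsilon>\<close>
    by (intro tendsto_divide tail_measure_tendsto[OF B(1)] tail_measure_tendsto[OF top, simplified])
      simp
  then have "eventually (\<lambda>t. P (B \<inter> cyl x t) / P (cyl x t) < (1 + r) / 2) sequentially"
    using \<open>r < 1\<close> by (intro order_tendstoD(2)) auto
  then obtain N where N: "\<And>t. t \<ge> N \<Longrightarrow> P (B \<inter> cyl x t) / P (cyl x t) < (1 + r) / 2"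
    unfolding eventually_sequentially by blast
  have "0 < (1 - r) / 2"
    using \<open>r < 1\<close> by simp
  then obtain t where "t \<ge> N" and "\<forall>E\<in>S. \<bar>P (E \<inter> cyl x t) / P (cyl x t)
      - tail_measure P x (E \<inter> B) / tail_measure P x B\<bar> < (1 - r) / 2"
    using blackwell_dubins_tail_conditional[OF B(1,2) bd] by blast
  then have "\<bar>P (B \<inter> cyl x t) / P (cyl x t) - tail_measure P x (B \<inter> B) / tail_measure P x B\<bar>
      < (1 - r) / 2"
    using B(1) by blast
  then have "\<bar>P (B \<inter> cyl x t) / P (cyl x t) - 1\<bar> < (1 - r) / 2"
    using B(2) by simp
  then have "1 - P (B \<inter> cyl x t) / P (cyl x t) < (1 - r) / 2"
    by (simp only: abs_less_iff minus_diff_eq)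
  with N[OF \<open>t \<ge> N\<close>] show False
    by (simp add: field_simps)
qed

end

lemma Delta_BD_small_cylinder:
  assumes "admissible_sigma S" and P: "P \<in> Delta_BD S" and "0 < \<epsilon>"
  shows "\<exists>t. P (cyl x t) \<le> \<epsilon>"
proof (rule ccontr)
  assume "\<not> ?thesis"
  then have big: "\<And>t. \<epsilon> \<le> P (cyl x t)"
    by (meson not_le less_imp_le)
  have bd: "blackwell_dubins S P" and sn: "strongly_nonatomic S P" and fa: "fa_prob S P"
    using P by (simp_all add: Delta_BD_def)
  interpret fa_probability S P
    using assms(1) fa by unfold_locales
  show False
  proof (cases "\<forall>B\<in>S. tail_measure P x B = 0 \<or> tail_measure P x B = tail_measure P x UNIV")
    case True
    then show False
      using two_valued_tail_contradiction[OF bd sn \<open>0 < \<epsilon>\<close> big] by blast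
  next
    case False
    then obtain B where B: "B \<in> S" "tail_measure P x B \<noteq> 0" "tail_measure P x B \<noteq> tail_measure P x UNIV"
      by blast
    moreover have "0 \<le> tail_measure P x B" "tail_measure P x B \<le> tail_measure P x UNIV"
      using tail_measure_nonneg[OF B(1)] tail_measure_mono[OF B(1) top subset_UNIV] .
    ultimately show False
      using proper_tail_set_contradiction[OF bd \<open>0 < \<epsilon>\<close> big B(1)] by simp
  qed
qed

theorem theorem3:
  fixes S :: "path set set" and \<epsilon> :: real
  assumes "admissible_sigma S"
    and "0 < \<epsilon>" and "\<epsilon> \<le> 1"
  shows "\<exists>T :: (path set \<Rightarrow> real) \<Rightarrow> path set.
           (\<forall>P\<in>Delta_BD S. open (T P)) \<and>
           (\<forall>P\<in>Delta_BD S. P (T P) \<le> \<epsilon>) \<and>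
           nonmanipulable S T"
proof -
  define x :: path where "x = (\<lambda>_. False)"
  define n where "n P = (SOME t. P (cyl x t) \<le> \<epsilon>)" for P :: "path set \<Rightarrow> real"
  have "P (cyl x (n P)) \<le> \<epsilon>" if "P \<in> Delta_BD S" for P
    unfolding n_def using Delta_BD_small_cylinder[OF assms(1) that assms(2)] by (rule someI_ex)
  then show ?thesis
    using open_cyl nonmanipulable_cyl by (intro exI[of _ "\<lambda>P. cyl x (n P)"]) auto
qed

end
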